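(* Let $0<1/n_0\ll\delta\ll\alpha\ll 1$, and let $t,k,n\in\mathbb N$ with $n\geq n_0$ and $k^2-k+2\leq n\leq k^2+k+1$. Let $\mathcal H$ be an $n$-vertex hypergraph with codegree at most $t$ in which every edge has size at least $(1-\delta)\sqrt n$, and let $e,f\in\mathcal H$ be distinct edges of size at most $k$ with $V(e)\cap V(f)\neq\emptyset$ and $|V(e)\cap V(f)|\leq\alpha k$. If either (i) at least one of $e,f$ has size at most $k-1$, (ii) $|V(e)\cap V(f)|\geq 2$, or (iii) there exists a vertex in $V(e)\cap V(f)$ which is contained in at most $t/(4\delta)$ edges of size at most $k-1$, then $\{e,f\}$ is $t$-useful.
   Context: Constant hierarchies: a statement holding whenever $0<a\ll b\le 1$ means there is a non-decreasing function $f:(0,1]\to(0,1]$ such that it holds for all $a,b$ with $a\leq f(b)$; longer hierarchies are defined analogously, constants chosen from right to left. A hypergraph $\mathcal H$ has a finite vertex set $V(\mathcal H)$ and a finite set of edges, each edge $e$ with a nonempty set $V(e)\subseteq V(\mathcal H)$ (multiple edges allowed); $n$-vertex means $|V(\mathcal H)|=n$; the size of $e$ is $|V(e)|$. The codegree of $\mathcal H$ is the maximum over distinct vertices $u,v$ of the number of edges containing both. $N(e)$ is the set of edges $g\neq e$ with $V(e)\cap V(g)\neq\emptyset$. In an $n$-vertex hypergraph, a pair $\{e,f\}$ of distinct edges is $t$-useful if $V(e)\cap V(f)\neq\emptyset$ and $|N(e)\cap N(f)|\leq tn-3$. *)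

theory Defs
  imports Complex_Main
begin

text \<open>A hypergraph is given by a finite vertex set V, a finite set E of edge
  labels (so that multiple edges are allowed) and a map verts assigning to each
  edge label its nonempty vertex set V(e), contained in V.\<close>

definition hypergraph :: "'v set \<Rightarrow> 'e set \<Rightarrow> ('e \<Rightarrow> 'v set) \<Rightarrow> bool" where
  "hypergraph V E verts \<longleftrightarrow> finite V \<and> finite E \<and>
     (\<forall>e\<in>E. verts e \<noteq> {} \<and> verts e \<subseteq> V)"

definition codegree_at_most :: "'v set \<Rightarrow> 'e set \<Rightarrow> ('e \<Rightarrow> 'v set) \<Rightarrow> nat \<Rightarrow> bool" where
  "codegree_at_most V E verts t \<longleftrightarrow>
     (\<forall>u\<in>V. \<forall>v\<in>V. u \<noteq> v \<longrightarrow> card {g\<in>E. u \<in> verts g \<and> v \<in> verts g} \<le> t)"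

definition nbhd :: "'e set \<Rightarrow> ('e \<Rightarrow> 'v set) \<Rightarrow> 'e \<Rightarrow> 'e set" where
  "nbhd E verts e = {g\<in>E. g \<noteq> e \<and> verts e \<inter> verts g \<noteq> {}}"

definition t_useful :: "'v set \<Rightarrow> 'e set \<Rightarrow> ('e \<Rightarrow> 'v set) \<Rightarrow> nat \<Rightarrow> 'e \<Rightarrow> 'e \<Rightarrow> bool" where
  "t_useful V E verts t e f \<longleftrightarrow> e \<noteq> f \<and> verts e \<inter> verts f \<noteq> {} \<and>
     real (card (nbhd E verts e \<inter> nbhd E verts f)) \<le> real t * real (card V) - 3"

end

theory Submission
  imports Defs
begin

(* Write I = V(e) \<inter> V(f) and L(v) for the edges other than e, f through v. A common
   neighbour of e and f either passes through a vertex of I or contains a pair of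
   (V(e) - V(f)) \<times> (V(f) - V(e)), so |N(e) \<inter> N(f)| \<le> \<Sum>v\<in>I |L(v)| + t |V(e) - V(f)| |V(f) - V(e)|.
   Double counting the pairs through a vertex v under the codegree bound gives
   \<Sum>g\<ni>v (|g| - 1) \<le> t (n - 1); as every edge has at least (1 - \<delta>) \<surd>n vertices, this yields
   |L(v)| \<le> (1 + 2\<delta>) t \<surd>n with \<surd>n < k + 1. If |I| \<ge> 2 (and |I| \<le> k/8), or if one of e, f has
   at most k - 1 vertices, these bounds already give tn - 3 because n \<ge> k\<^sup>2 - k + 2. In the
   remaining case I = {v} and |e| = |f| = k; then almost all edges in L(v) have at least k
   vertices, and the budget at v sharpens to |L(v)| \<le> t (n - (k - 1)\<^sup>2) - 3, which is exactly
   what is needed. The constants are \<alpha> \<le> 1/8, \<delta> \<le> 1/100 and n0 \<ge> 16/\<delta>\<^sup>2, so that \<delta> \<surd>n \<ge> 4. *)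

lemma hypergraph_verts_subset: "hypergraph V E verts \<Longrightarrow> g \<in> E \<Longrightarrow> verts g \<subseteq> V"
  unfolding hypergraph_def by blast

lemma hypergraph_finite_verts: "hypergraph V E verts \<Longrightarrow> g \<in> E \<Longrightarrow> finite (verts g)"
  unfolding hypergraph_def by (meson finite_subset)

lemma hypergraph_card_verts_pos: "hypergraph V E verts \<Longrightarrow> g \<in> E \<Longrightarrow> 0 < card (verts g)"
  using hypergraph_finite_verts unfolding hypergraph_def by (simp add: card_gt_0_iff)

lemma sum_card_Int_eq_sum_card_incident:
  assumes "finite S" "finite B"
  shows "(\<Sum>g\<in>S. card (F g \<inter> B)) = (\<Sum>u\<in>B. card {g\<in>S. u \<in> F g})"
proof -
  have "card (F g \<inter> B) = (\<Sum>u\<in>B. if u \<in> F g then 1 else 0)" for g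
    using assms(2) by (simp add: sum.inter_filter[symmetric] Int_def conj_commute)
  moreover have "card {g\<in>S. u \<in> F g} = (\<Sum>g\<in>S. if u \<in> F g then 1 else 0)" for u
    using assms(1) by (simp add: sum.inter_filter[symmetric])
  ultimately show ?thesis by (simp add: sum.swap[of _ S])
qed

(* Every vertex u \<noteq> v lies in at most t of the edges through v. *)

lemma sum_card_verts_incident_le:
  assumes hg: "hypergraph V E verts" and cd: "codegree_at_most V E verts t" and v: "v \<in> V"
  shows "(\<Sum>g\<in>{g\<in>E. v \<in> verts g}. card (verts g) - 1) \<le> t * (card V - 1)"
proof -
  let ?S = "{g\<in>E. v \<in> verts g}"
  have fin: "finite V" "finite E" using hg unfolding hypergraph_def by auto
  have "(\<Sum>g\<in>?S. card (verts g) - 1) = (\<Sum>g\<in>?S. card (verts g \<inter> (V - {v})))"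
  proof (rule sum.cong)
    fix g assume g: "g \<in> ?S"
    then have "verts g \<inter> (V - {v}) = verts g - {v}"
      using hypergraph_verts_subset[OF hg] by blast
    then show "card (verts g) - 1 = card (verts g \<inter> (V - {v}))"
      using g hypergraph_finite_verts[OF hg] by simp
  qed simp
  also have "\<dots> = (\<Sum>u\<in>V - {v}. card {g\<in>?S. u \<in> verts g})"
    using fin by (intro sum_card_Int_eq_sum_card_incident) auto
  also have "\<dots> \<le> (\<Sum>u\<in>V - {v}. t)"
  proof (rule sum_mono)
    fix u assume "u \<in> V - {v}"
    moreover have "{g\<in>?S. u \<in> verts g} = {g\<in>E. u \<in> verts g \<and> v \<in> verts g}" by auto
    ultimately show "card {g\<in>?S. u \<in> verts g} \<le> t"
      using cd v unfolding codegree_at_most_def by auto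
  qed
  also have "\<dots> = t * (card V - 1)" using v fin by simp
  finally show ?thesis .
qed

(* A common neighbour of e and f either passes through a common vertex, or meets
   e - f and f - e and hence contains one of the pairs in their product. *)

lemma card_common_nbhd_le:
  assumes hg: "hypergraph V E verts" and cd: "codegree_at_most V E verts t"
    and e: "e \<in> E" and f: "f \<in> E"
  shows "card (nbhd E verts e \<inter> nbhd E verts f) \<le>
     (\<Sum>v\<in>verts e \<inter> verts f. card {g\<in>E. v \<in> verts g \<and> g \<noteq> e \<and> g \<noteq> f})
     + t * card (verts e - verts f) * card (verts f - verts e)"
proof -
  have fin: "finite E" "finite (verts e)" "finite (verts f)"
    using hg e f hypergraph_finite_verts[OF hg] unfolding hypergraph_def by auto
  define P where "P = (verts e - verts f) \<times> (verts f - verts e)"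
  define A where "A = (\<Union>v\<in>verts e \<inter> verts f. {g\<in>E. v \<in> verts g \<and> g \<noteq> e \<and> g \<noteq> f})"
  define B where "B = (\<Union>p\<in>P. {g\<in>E. fst p \<in> verts g \<and> snd p \<in> verts g})"
  have "nbhd E verts e \<inter> nbhd E verts f \<subseteq> A \<union> B"
  proof
    fix g assume "g \<in> nbhd E verts e \<inter> nbhd E verts f"
    then obtain u w where "g \<in> E" "g \<noteq> e" "g \<noteq> f"
      and u: "u \<in> verts e" "u \<in> verts g" and w: "w \<in> verts f" "w \<in> verts g"
      unfolding nbhd_def by blast
    show "g \<in> A \<union> B"
    proof (cases "u \<in> verts f \<or> w \<in> verts e")
      case True
      then show ?thesis using \<open>g \<in> E\<close> \<open>g \<noteq> e\<close> \<open>g \<noteq> f\<close> u w unfolding A_def by blast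
    next
      case False
      then have "(u, w) \<in> P" using u w unfolding P_def by blast
      then show ?thesis using \<open>g \<in> E\<close> u w unfolding B_def by force
    qed
  qed
  moreover have "finite (A \<union> B)"
    using fin(1) by (rule finite_subset[rotated]) (auto simp: A_def B_def)
  ultimately have "card (nbhd E verts e \<inter> nbhd E verts f) \<le> card (A \<union> B)"
    by (rule card_mono[rotated])
  also have "\<dots> \<le> card A + card B" by (rule card_Un_le)
  also have "card A \<le> (\<Sum>v\<in>verts e \<inter> verts f. card {g\<in>E. v \<in> verts g \<and> g \<noteq> e \<and> g \<noteq> f})"
    unfolding A_def using fin by (intro card_UN_le) auto
  also have "card B \<le> (\<Sum>p\<in>P. card {g\<in>E. fst p \<in> verts g \<and> snd p \<in> verts g})"
    unfolding B_def P_def using fin by (intro card_UN_le) auto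
  also have "\<dots> \<le> (\<Sum>p\<in>P. t)"
  proof (rule sum_mono)
    fix p assume "p \<in> P"
    then have "fst p \<in> V" "snd p \<in> V" "fst p \<noteq> snd p"
      using hypergraph_verts_subset[OF hg e] hypergraph_verts_subset[OF hg f]
      unfolding P_def by auto
    then show "card {g\<in>E. fst p \<in> verts g \<and> snd p \<in> verts g} \<le> t"
      using cd unfolding codegree_at_most_def by auto
  qed
  also have "\<dots> = t * card (verts e - verts f) * card (verts f - verts e)"
    unfolding P_def by (simp add: card_cartesian_product)
  finally show ?thesis by simp
qed

lemma codegree_at_most_ge_1:
  assumes hg: "hypergraph V E verts" and cd: "codegree_at_most V E verts t"
    and g: "g \<in> E" and two: "2 \<le> card (verts g)"
  shows "1 \<le> t"
proof -
  have "\<not> card (verts g) \<le> Suc 0" using two by simp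
  then obtain u w where uw: "u \<in> verts g" "w \<in> verts g" "u \<noteq> w"
    using card_le_Suc0_iff_eq[OF hypergraph_finite_verts[OF hg g]] by blast
  have "finite E" using hg unfolding hypergraph_def by simp
  then have "0 < card {h\<in>E. u \<in> verts h \<and> w \<in> verts h}"
    using g uw by (auto simp: card_gt_0_iff)
  also have "\<dots> \<le> t"
    using cd uw hypergraph_verts_subset[OF hg g] unfolding codegree_at_most_def by auto
  finally show ?thesis by simp
qed

lemma sqrt_near_square_bounds:
  fixes k n :: nat
  assumes "k^2 + 2 \<le> n + k" "n \<le> k^2 + k + 1"
  shows "real k - 1/2 < sqrt n" "sqrt n < real k + 1"
proof -
  have "real (k^2 + 2) \<le> real (n + k)" "real n \<le> real (k^2 + k + 1)"
    using assms by (simp_all only: of_nat_le_iff)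
  then have n: "real k ^ 2 + 2 \<le> real n + real k" "real n \<le> real k ^ 2 + real k + 1"
    by simp_all
  have sq: "(real k - 1/2)^2 = real k ^ 2 - real k + 1/4" "(real k + 1)^2 = real k ^ 2 + 2 * real k + 1"
    by (simp_all add: power2_eq_square algebra_simps)
  have "k \<noteq> 0" using assms by auto
  then have "1 \<le> real k" by simp
  have "(real k - 1/2)^2 < real n" using n(1) sq(1) by linarith
  then show "real k - 1/2 < sqrt n" by (rule real_less_rsqrt)
  have "real n < (real k + 1)^2" using n(2) sq(2) \<open>1 \<le> real k\<close> by linarith
  then show "sqrt n < real k + 1" by (intro real_less_lsqrt) simp_all
qed

lemma hundred_mult_le_of_le_mult:
  fixes c d x :: real
  assumes "0 < c" "c \<le> d * x" "0 < d" "d \<le> 1/100"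
  shows "100 * c \<le> x"
proof -
  have "0 < x" using assms zero_less_mult_pos[of d x] by simp
  then have "d * x \<le> (1/100) * x" using assms by (intro mult_right_mono) auto
  then show ?thesis using assms by linarith
qed

lemma degree_bound_of_budget:
  fixes a t q d :: real
  assumes budget: "a * ((1 - d) * q - 1) \<le> t * (q^2 - 1)"
    and d: "0 < d" "d \<le> 1/100" "4 \<le> d * q" and "0 \<le> t"
  shows "a \<le> t * q * (1 + 2*d)"
proof -
  have q: "400 \<le> q" using hundred_mult_le_of_le_mult[of 4 d q] d by simp
  have pos: "0 < (1 - d) * q - 1"
    using d q mult_right_mono[of "99/100" "1 - d" q] by linarith
  have "2 \<le> q * (d/2)" using d by (simp add: mult.commute)
  also have "\<dots> \<le> q * (d - 2*d*d)"
    using d q mult_left_mono[of d "1/100" d] by (intro mult_left_mono) auto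
  finally have "1 + 2*d \<le> q * (d - 2*d*d)" using d by linarith
  then have "q * (1 + 2*d) \<le> q * (q * (d - 2*d*d))" using q by (intro mult_left_mono) auto
  then have "q^2 \<le> (q * (1 + 2*d)) * ((1 - d) * q - 1)"
    by (simp add: power2_eq_square algebra_simps)
  then have "t * q^2 \<le> t * ((q * (1 + 2*d)) * ((1 - d) * q - 1))"
    using \<open>0 \<le> t\<close> by (rule mult_left_mono)
  moreover have "a * ((1 - d) * q - 1) \<le> t * q^2"
    using budget \<open>0 \<le> t\<close> by (simp add: algebra_simps)
  ultimately have "a * ((1 - d) * q - 1) \<le> (t * q * (1 + 2*d)) * ((1 - d) * q - 1)"
    by (simp add: mult.assoc)
  then show ?thesis using pos by (rule mult_right_le_imp_le)
qed

lemma two_common_vertices_arith: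
  fixes s q k n d :: real
  assumes s: "2 \<le> s" "s \<le> k / 8" and d: "0 < d" "d \<le> 1/100"
    and q: "0 \<le> q" "q < k + 1" and k: "300 \<le> k" and n: "k^2 - k + 2 \<le> n"
  shows "s * q * (1 + 2*d) + (k - s)^2 \<le> n - 3"
proof -
  have "s * q * (1 + 2*d) \<le> s * (k + 1) * (51/50)"
    using s d q by (intro mult_mono) auto
  moreover have "s * s \<le> s * (k / 8)" using s by (intro mult_left_mono) auto
  \<comment> \<open>after bounding s * s by s k / 8 the left-hand side is linear in s with negative slope,
    so s = 2 is the worst case\<close>
  moreover have "s * (51/50 - (2 - 1/8 - 51/50) * k) \<le> 2 * (51/50 - (2 - 1/8 - 51/50) * k)"
    using s k by (intro mult_right_mono_neg) auto
  ultimately show ?thesis using k n by (simp add: power2_eq_square algebra_simps)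
qed

lemma one_common_vertex_arith:
  fixes q k n d :: real
  assumes d: "0 < d" "d \<le> 1/100" and q: "0 \<le> q" "q < k + 1"
    and k: "300 \<le> k" and n: "k^2 - k + 2 \<le> n"
  shows "q * (1 + 2*d) + (k - 2) * (k - 1) \<le> n - 3"
proof -
  have "q * (1 + 2*d) \<le> (k + 1) * (51/50)" using d q by (intro mult_mono) auto
  then show ?thesis using k n by (simp add: power2_eq_square algebra_simps)
qed

lemma full_edges_arith:
  fixes k d t n L :: real
  assumes k: "3 \<le> d * k" and d: "0 < d" "d \<le> 1/100" and t: "0 < t"
    and P: "k + 1 \<le> n - (k - 1)^2"
    and budget: "(k - 1) * L \<le> t * (n - 1) - 2 * (k - 1) + t / (8 * d) + t * (k + 1) / 4"
  shows "L < t * (n - (k - 1)^2) - 2"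
proof (rule ccontr)
  define P where "P = n - (k - 1)^2"
  have "300 \<le> k" using hundred_mult_le_of_le_mult[of 3 d k] k d by simp
  assume "\<not> L < t * (n - (k - 1)^2) - 2"
  then have "(k - 1) * (t * P - 2) \<le> (k - 1) * L"
    using \<open>300 \<le> k\<close> unfolding P_def by (intro mult_left_mono) auto
  then have "(k - 2) * (t * P) \<le> t * (k * k - 2 * k) + t / (8 * d) + t * (k + 1) / 4"
    using budget by (simp add: P_def power2_eq_square algebra_simps)
  moreover have "(k - 2) * (t * (k + 1)) \<le> (k - 2) * (t * P)"
    using \<open>300 \<le> k\<close> t P unfolding P_def by (intro mult_left_mono) auto
  ultimately have "t * (k - 2) \<le> t * (1 / (8 * d) + (k + 1) / 4)"
    by (simp add: algebra_simps)
  then have "d * (k - 2) \<le> d * (1 / (8 * d) + (k + 1) / 4)"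
    using t d by (intro mult_left_mono) auto
  also have "\<dots> = 1/8 + d * k / 4 + d / 4" using d by (simp add: field_simps)
  finally show False using k d by (simp add: right_diff_distrib)
qed

lemma mult_le_diff_3:
  fixes t x n :: real
  assumes "1 \<le> t" "x \<le> n - 3"
  shows "t * x \<le> t * n - 3"
  using assms mult_left_mono[of x "n - 3" t] by (simp add: algebra_simps)

lemma four_le_mult_sqrt:
  fixes \<delta> :: real and n0 n :: nat
  assumes "0 < \<delta>" "0 < n0" "1 / real n0 \<le> \<delta>^2 / 16" "n0 \<le> n"
  shows "4 \<le> \<delta> * sqrt n"
proof -
  have "16 \<le> \<delta>^2 * real n0" using assms by (simp add: field_simps)
  also have "\<dots> \<le> \<delta>^2 * real n" using assms by (intro mult_left_mono) auto
  finally have "4 \<le> sqrt (\<delta>^2 * real n)" by (intro real_le_rsqrt) simp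
  also have "\<dots> = \<delta> * sqrt n" using assms by (simp add: real_sqrt_mult)
  finally show ?thesis .
qed

locale near_square_pair =
  fixes V :: "'v set" and E :: "'e set" and verts :: "'e \<Rightarrow> 'v set"
    and t k :: nat and \<delta> :: real and e f :: 'e
  assumes hypergraph: "hypergraph V E verts"
    and codegree: "codegree_at_most V E verts t"
    and large_edges: "\<And>g. g \<in> E \<Longrightarrow> (1 - \<delta>) * sqrt (card V) \<le> card (verts g)"
    and \<delta>_pos: "0 < \<delta>" and \<delta>_le: "\<delta> \<le> 1/100" and \<delta>_sqrt: "4 \<le> \<delta> * sqrt (card V)"
    and near_square: "k^2 + 2 \<le> card V + k" "card V \<le> k^2 + k + 1"
    and e: "e \<in> E" and f: "f \<in> E" and e_ne_f: "e \<noteq> f"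
    and card_e: "card (verts e) \<le> k" and card_f: "card (verts f) \<le> k"
    and common_ne: "verts e \<inter> verts f \<noteq> {}"
begin

abbreviation common :: "'v set" where
  "common \<equiv> verts e \<inter> verts f"

abbreviation common_nbhd :: "'e set" where
  "common_nbhd \<equiv> nbhd E verts e \<inter> nbhd E verts f"

definition other_edges_at :: "'v \<Rightarrow> 'e set" where
  "other_edges_at v = {g\<in>E. v \<in> verts g \<and> g \<noteq> e \<and> g \<noteq> f}"

lemma finite_E: "finite E"
  using hypergraph unfolding hypergraph_def by simp

lemma finite_other_edges_at: "finite (other_edges_at v)"
  using finite_E unfolding other_edges_at_def by simp

lemma finite_common: "finite common"
  using hypergraph_finite_verts[OF hypergraph e] by simp

lemma card_common_le: "card common \<le> card (verts e)" "card common \<le> card (verts f)"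
  using hypergraph_finite_verts[OF hypergraph] e f by (auto intro: card_mono)

lemma card_common_pos: "0 < card common"
  using finite_common common_ne by (simp add: card_gt_0_iff)

lemmas sqrt_card_V_bounds = sqrt_near_square_bounds[OF near_square]

lemma sqrt_card_V_ge: "400 \<le> sqrt (card V)"
  using hundred_mult_le_of_le_mult[OF _ \<delta>_sqrt \<delta>_pos \<delta>_le] by simp

lemma k_large: "300 \<le> real k" "3 \<le> \<delta> * real k"
proof -
  have "\<delta> * sqrt (card V) < \<delta> * (real k + 1)"
    by (intro mult_strict_left_mono sqrt_card_V_bounds(2) \<delta>_pos)
  then have "4 \<le> \<delta> * (real k + 1)" using \<delta>_sqrt by linarith
  then show "3 \<le> \<delta> * real k" using \<delta>_le by (simp add: algebra_simps)
  then show "300 \<le> real k" using hundred_mult_le_of_le_mult[of 3 \<delta> "real k"] \<delta>_pos \<delta>_le by simp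
qed

lemma t_ge_1: "1 \<le> t"
proof (rule codegree_at_most_ge_1[OF hypergraph codegree e])
  have "(99/100) * sqrt (card V) \<le> (1 - \<delta>) * sqrt (card V)"
    using \<delta>_le by (intro mult_right_mono) auto
  then show "2 \<le> card (verts e)" using large_edges[OF e] sqrt_card_V_ge by linarith
qed

lemma card_common_nbhd_le_sum:
  "real (card common_nbhd) \<le> (\<Sum>v\<in>common. real (card (other_edges_at v)))
     + real t * (real (card (verts e)) - card common) * (real (card (verts f)) - card common)"
proof -
  have "card (verts e - verts f) = card (verts e) - card common"
    "card (verts f - verts e) = card (verts f) - card common"
    using finite_common by (simp_all add: card_Diff_subset_Int Int_commute)
  then have "card common_nbhd \<le> (\<Sum>v\<in>common. card (other_edges_at v))
      + t * (card (verts e) - card common) * (card (verts f) - card common)"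
    using card_common_nbhd_le[OF hypergraph codegree e f] unfolding other_edges_at_def by simp
  then have "real (card common_nbhd) \<le> real ((\<Sum>v\<in>common. card (other_edges_at v))
      + t * (card (verts e) - card common) * (card (verts f) - card common))"
    by (simp only: of_nat_le_iff)
  then show ?thesis using card_common_le by (simp add: of_nat_diff)
qed

lemma budget_at_common_vertex:
  assumes v: "v \<in> common"
  shows "(\<Sum>g\<in>other_edges_at v. real (card (verts g)) - 1)
      + (real (card (verts e)) - 1) + (real (card (verts f)) - 1) \<le> real t * (real (card V) - 1)"
proof -
  have pos: "1 \<le> card (verts g)" if "g \<in> E" for g
    using hypergraph_card_verts_pos[OF hypergraph that] by simp
  have vV: "v \<in> V" using v hypergraph_verts_subset[OF hypergraph e] by auto
  have "{g\<in>E. v \<in> verts g} = insert e (insert f (other_edges_at v))"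
    using v e f unfolding other_edges_at_def by auto
  then have "(\<Sum>g\<in>other_edges_at v. card (verts g) - 1) + (card (verts e) - 1)
      + (card (verts f) - 1) \<le> t * (card V - 1)"
    using sum_card_verts_incident_le[OF hypergraph codegree vV] finite_other_edges_at e_ne_f
    by (simp add: other_edges_at_def)
  then have "real ((\<Sum>g\<in>other_edges_at v. card (verts g) - 1) + (card (verts e) - 1)
      + (card (verts f) - 1)) \<le> real (t * (card V - 1))"
    by (simp only: of_nat_le_iff)
  moreover have "finite V" using hypergraph unfolding hypergraph_def by simp
  then have "1 \<le> card V" using card_mono[of V "{v}"] vV by simp
  ultimately show ?thesis
    using pos e f by (simp add: of_nat_diff other_edges_at_def)
qed

lemma card_other_edges_at_le:
  assumes v: "v \<in> common"
  shows "real (card (other_edges_at v)) \<le> real t * sqrt (card V) * (1 + 2 * \<delta>)"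
proof (rule degree_bound_of_budget[OF _ \<delta>_pos \<delta>_le \<delta>_sqrt])
  have "real (card (other_edges_at v)) * ((1 - \<delta>) * sqrt (card V) - 1)
      = (\<Sum>g\<in>other_edges_at v. (1 - \<delta>) * sqrt (card V) - 1)" by simp
  also have "\<dots> \<le> (\<Sum>g\<in>other_edges_at v. real (card (verts g)) - 1)"
    using large_edges by (intro sum_mono) (auto simp: other_edges_at_def)
  also have "\<dots> \<le> real t * (real (card V) - 1)"
  proof -
    have "0 < card (verts e)" "0 < card (verts f)"
      using hypergraph_card_verts_pos[OF hypergraph] e f by auto
    then have "1 \<le> real (card (verts e))" "1 \<le> real (card (verts f))" by linarith+
    then show ?thesis using budget_at_common_vertex[OF v] by linarith
  qed
  finally show "real (card (other_edges_at v)) * ((1 - \<delta>) * sqrt (card V) - 1)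
      \<le> real t * ((sqrt (card V))^2 - 1)" by simp
qed simp

lemma card_V_ge: "real k ^ 2 - real k + 2 \<le> real (card V)"
proof -
  have "real (k^2 + 2) \<le> real (card V + k)" using near_square(1) by (simp only: of_nat_le_iff)
  then show ?thesis by simp
qed

lemma real_card_V_minus_square:
  "real (card V - (k - 1)^2) = real (card V) - (real k - 1)^2"
proof -
  have "1 \<le> k" using k_large by simp
  moreover have "(k - 1)^2 \<le> card V"
    using near_square(1) by (simp add: power2_eq_square algebra_simps)
  ultimately show ?thesis by (simp add: of_nat_diff)
qed

lemma card_V_minus_square_ge: "real k + 1 \<le> real (card V) - (real k - 1)^2"
  using card_V_ge by (simp add: power2_eq_square algebra_simps)

lemma common_nbhd_bound_if_two_common:
  assumes two: "2 \<le> card common" and small: "real (card common) \<le> real k / 8"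
  shows "real (card common_nbhd) \<le> real t * real (card V) - 3"
proof -
  let ?s = "real (card common)" and ?q = "sqrt (card V)"
  have "(\<Sum>v\<in>common. real (card (other_edges_at v))) \<le> ?s * (real t * ?q * (1 + 2 * \<delta>))"
    using card_other_edges_at_le by (intro sum_bounded_above) auto
  moreover have "(real (card (verts e)) - ?s) * (real (card (verts f)) - ?s) \<le> (real k - ?s)^2"
    using card_e card_f card_common_le unfolding power2_eq_square by (intro mult_mono) auto
  then have "real t * (real (card (verts e)) - ?s) * (real (card (verts f)) - ?s)
      \<le> real t * (real k - ?s)^2"
    by (simp add: mult.assoc mult_left_mono)
  ultimately have "real (card common_nbhd) \<le> real t * (?s * ?q * (1 + 2 * \<delta>) + (real k - ?s)^2)"
    using card_common_nbhd_le_sum by (simp add: algebra_simps)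
  also have "\<dots> \<le> real t * real (card V) - 3"
    using two small \<delta>_pos \<delta>_le sqrt_card_V_bounds(2) k_large(1) card_V_ge t_ge_1
    by (intro mult_le_diff_3 two_common_vertices_arith) auto
  finally show ?thesis .
qed

lemma common_nbhd_bound_if_small_edge:
  assumes one: "card common = 1" and small: "card (verts e) + 1 \<le> k \<or> card (verts f) + 1 \<le> k"
  shows "real (card common_nbhd) \<le> real t * real (card V) - 3"
proof -
  obtain v where v: "common = {v}" using one card_1_singletonE by blast
  let ?a = "real (card (verts e)) - 1" and ?b = "real (card (verts f)) - 1"
  have ab: "0 \<le> ?a" "?a \<le> real k - 1" "0 \<le> ?b" "?b \<le> real k - 1"
    using card_e card_f hypergraph_card_verts_pos[OF hypergraph] e f by (auto simp: Suc_le_eq)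
  have "?a * ?b \<le> (real k - 2) * (real k - 1)"
  proof (cases "card (verts e) + 1 \<le> k")
    case True
    then show ?thesis using ab by (intro mult_mono) auto
  next
    case False
    then have "?b \<le> real k - 2" using small by auto
    then have "?b * ?a \<le> (real k - 2) * (real k - 1)" using ab by (intro mult_mono) auto
    then show ?thesis by (simp add: mult.commute)
  qed
  have "real (card common_nbhd) \<le> real (card (other_edges_at v)) + real t * (?a * ?b)"
    using card_common_nbhd_le_sum by (simp add: v mult.assoc)
  also have "\<dots> \<le> real t * sqrt (card V) * (1 + 2 * \<delta>) + real t * ((real k - 2) * (real k - 1))"
    using card_other_edges_at_le[of v] \<open>?a * ?b \<le> _\<close> v by (intro add_mono mult_left_mono) auto
  also have "\<dots> = real t * (sqrt (card V) * (1 + 2 * \<delta>) + (real k - 2) * (real k - 1))"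
    by (simp add: algebra_simps)
  also have "\<dots> \<le> real t * real (card V) - 3"
    using \<delta>_pos \<delta>_le sqrt_card_V_bounds(2) k_large(1) card_V_ge t_ge_1
    by (intro mult_le_diff_3 one_common_vertex_arith) auto
  finally show ?thesis .
qed

lemma sum_card_other_edges_at_ge:
  assumes few_small: "real (card {g\<in>E. v \<in> verts g \<and> card (verts g) + 1 \<le> k}) \<le> real t / (4 * \<delta>)"
  shows "(real k - 1) * card (other_edges_at v) - real t / (8 * \<delta>) - real t * (real k + 1) / 4
      \<le> (\<Sum>g\<in>other_edges_at v. real (card (verts g)) - 1)"
proof -
  define S where "S = {g\<in>E. v \<in> verts g \<and> card (verts g) + 1 \<le> k}"
  define z where "z = real k - (1 - \<delta>) * sqrt (card V)"
  have "\<delta> * sqrt (card V) \<le> \<delta> * (real k + 1)"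
    using sqrt_card_V_bounds(2) \<delta>_pos by (intro mult_left_mono) auto
  then have z: "z \<le> 1/2 + \<delta> * (real k + 1)"
    unfolding z_def using sqrt_card_V_bounds(1) by (simp add: algebra_simps)
  \<comment> \<open>only the edges in S fall short of k vertices, and by at most z\<close>
  have "real k - 1 - (if g \<in> S then z else 0) \<le> real (card (verts g)) - 1"
    if "g \<in> other_edges_at v" for g
    using that large_edges[of g] unfolding S_def z_def other_edges_at_def by auto
  then have "(\<Sum>g\<in>other_edges_at v. real k - 1 - (if g \<in> S then z else 0))
      \<le> (\<Sum>g\<in>other_edges_at v. real (card (verts g)) - 1)"
    by (rule sum_mono)
  moreover have "(\<Sum>g\<in>other_edges_at v. if g \<in> S then z else 0) = card (other_edges_at v \<inter> S) * z"
    using sum.inter_restrict[OF finite_other_edges_at[of v], of "\<lambda>_. z" S] by simp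
  then have "(\<Sum>g\<in>other_edges_at v. real k - 1 - (if g \<in> S then z else 0))
      = (real k - 1) * card (other_edges_at v) - card (other_edges_at v \<inter> S) * z"
    by (simp add: sum_subtractf)
  moreover have "card (other_edges_at v \<inter> S) * z \<le> card (other_edges_at v \<inter> S) * (1/2 + \<delta> * (real k + 1))"
    using z by (intro mult_left_mono) auto
  moreover have "card (other_edges_at v \<inter> S) * (1/2 + \<delta> * (real k + 1))
      \<le> real t / (4 * \<delta>) * (1/2 + \<delta> * (real k + 1))"
  proof (rule mult_right_mono)
    have "card (other_edges_at v \<inter> S) \<le> card S"
      using finite_E by (intro card_mono) (auto simp: S_def other_edges_at_def)
    then show "real (card (other_edges_at v \<inter> S)) \<le> real t / (4 * \<delta>)"
      using few_small unfolding S_def by linarith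
  qed (use \<delta>_pos in simp)
  moreover have "real t / (4 * \<delta>) * (1/2 + \<delta> * (real k + 1))
      = real t / (8 * \<delta>) + real t * (real k + 1) / 4"
    using \<delta>_pos by (simp add: field_simps)
  ultimately show ?thesis by linarith
qed

lemma card_other_edges_at_le_refined:
  assumes v: "v \<in> common" and full: "card (verts e) = k" "card (verts f) = k"
    and few_small: "real (card {g\<in>E. v \<in> verts g \<and> card (verts g) + 1 \<le> k}) \<le> real t / (4 * \<delta>)"
  shows "card (other_edges_at v) + 3 \<le> t * (card V - (k - 1)^2)"
proof -
  have "(real k - 1) * card (other_edges_at v)
      \<le> real t * (real (card V) - 1) - 2 * (real k - 1) + real t / (8 * \<delta>) + real t * (real k + 1) / 4"
    using budget_at_common_vertex[OF v] sum_card_other_edges_at_ge[OF few_small] by (simp add: full)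
  then have "real (card (other_edges_at v)) < real t * (real (card V) - (real k - 1)^2) - 2"
    using t_ge_1 card_V_minus_square_ge
    by (intro full_edges_arith[OF k_large(2) \<delta>_pos \<delta>_le]) auto
  then have "real (card (other_edges_at v) + 2) < real (t * (card V - (k - 1)^2))"
    unfolding of_nat_mult real_card_V_minus_square by simp
  then show ?thesis by (simp only: of_nat_less_iff)
qed

lemma common_nbhd_bound_if_few_small_edges:
  assumes v: "common = {v}" and full: "card (verts e) = k" "card (verts f) = k"
    and few_small: "real (card {g\<in>E. v \<in> verts g \<and> card (verts g) + 1 \<le> k}) \<le> real t / (4 * \<delta>)"
  shows "real (card common_nbhd) \<le> real t * real (card V) - 3"
proof -
  have "real (card common_nbhd) \<le> real (card (other_edges_at v)) + real t * (real k - 1)^2"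
    using card_common_nbhd_le_sum by (simp add: v full power2_eq_square mult.assoc)
  also have "\<dots> \<le> real (t * (card V - (k - 1)^2)) - 3 + real t * (real k - 1)^2"
  proof -
    have "real (card (other_edges_at v) + 3) \<le> real (t * (card V - (k - 1)^2))"
      using card_other_edges_at_le_refined[OF _ full few_small] v by (simp only: of_nat_le_iff) simp
    then show ?thesis unfolding of_nat_mult real_card_V_minus_square by simp
  qed
  also have "\<dots> = real t * real (card V) - 3"
    unfolding of_nat_mult real_card_V_minus_square by (simp add: algebra_simps)
  finally show ?thesis .
qed

lemma t_useful_pair:
  assumes small_common: "real (card common) \<le> real k / 8"
    and alternatives: "card (verts e) + 1 \<le> k \<or> card (verts f) + 1 \<le> k \<or> 2 \<le> card common
      \<or> (\<exists>v\<in>common. real (card {g\<in>E. v \<in> verts g \<and> card (verts g) + 1 \<le> k}) \<le> real t / (4 * \<delta>))"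
  shows "t_useful V E verts t e f"
proof -
  have "real (card common_nbhd) \<le> real t * real (card V) - 3"
  proof (cases "2 \<le> card common")
    case True
    then show ?thesis using small_common by (rule common_nbhd_bound_if_two_common)
  next
    case False
    then have one: "card common = 1" using card_common_pos by simp
    then obtain v where v: "common = {v}" using card_1_singletonE by blast
    show ?thesis
    proof (cases "card (verts e) + 1 \<le> k \<or> card (verts f) + 1 \<le> k")
      case True
      then show ?thesis using one by (intro common_nbhd_bound_if_small_edge)
    next
      case False
      then show ?thesis using alternatives card_e card_f one v
        by (intro common_nbhd_bound_if_few_small_edges[OF v]) auto
    qed
  qed
  then show ?thesis unfolding t_useful_def using e_ne_f common_ne by simp
qed

end

theorem proposition4p6:
  "\<exists>c::real. 0 < c \<and> c \<le> 1 \<and>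
   (\<exists>g h :: real \<Rightarrow> real.
      mono_on {0<..1} g \<and> g ` {0<..1} \<subseteq> {0<..1} \<and>
      mono_on {0<..1} h \<and> h ` {0<..1} \<subseteq> {0<..1} \<and>
      (\<forall>(\<alpha>::real) (\<delta>::real) (n0::nat).
         0 < \<alpha> \<and> \<alpha> \<le> c \<and> 0 < \<delta> \<and> \<delta> \<le> g \<alpha> \<and> 0 < n0 \<and> 1 / real n0 \<le> h \<delta> \<longrightarrow>
         (\<forall>(t::nat) (k::nat) (n::nat) (V::'v set) (E::'e set) (verts::'e \<Rightarrow> 'v set) e f.
            n \<ge> n0 \<and> k^2 + 2 \<le> n + k \<and> n \<le> k^2 + k + 1 \<and>
            hypergraph V E verts \<and> card V = n \<and>
            codegree_at_most V E verts t \<and>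
            (\<forall>g\<in>E. real (card (verts g)) \<ge> (1 - \<delta>) * sqrt (real n)) \<and>
            e \<in> E \<and> f \<in> E \<and> e \<noteq> f \<and>
            card (verts e) \<le> k \<and> card (verts f) \<le> k \<and>
            verts e \<inter> verts f \<noteq> {} \<and>
            real (card (verts e \<inter> verts f)) \<le> \<alpha> * real k \<and>
            (card (verts e) + 1 \<le> k \<or> card (verts f) + 1 \<le> k
             \<or> card (verts e \<inter> verts f) \<ge> 2
             \<or> (\<exists>v\<in>verts e \<inter> verts f.
                  real (card {g\<in>E. v \<in> verts g \<and> card (verts g) + 1 \<le> k})
                    \<le> real t / (4 * \<delta>)))
            \<longrightarrow> t_useful V E verts t e f)))"
proof (rule exI[of _ "1/8"], (rule conjI, simp)+, rule exI[of _ "\<lambda>_. 1/100"],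
    rule exI[of _ "\<lambda>\<delta>. \<delta>^2/16"], intro conjI allI impI, goal_cases)
  case (5 \<alpha> \<delta> n0 t k n V E verts e f)
  then have "4 \<le> \<delta> * sqrt (card V)" by (intro four_le_mult_sqrt[of \<delta> n0]) blast+
  with 5 have "near_square_pair V E verts t k \<delta> e f" by unfold_locales auto
  moreover have "real (card (verts e \<inter> verts f)) \<le> real k / 8"
  proof -
    from 5 have "\<alpha> \<le> 1/8" "real (card (verts e \<inter> verts f)) \<le> \<alpha> * real k" by blast+
    moreover have "\<alpha> * real k \<le> 1/8 * real k" using \<open>\<alpha> \<le> 1/8\<close> by (intro mult_right_mono) auto
    ultimately show ?thesis by linarith
  qed
  ultimately show ?case
    using 5 by (intro near_square_pair.t_useful_pair) auto
qed (auto simp: mono_on_def intro: divide_right_mono power_mono,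
     metis order.trans power_le_one less_imp_le one_le_numeral)

end
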